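(* Let $\ell^{\infty}$ be the space of bounded real sequences $x=(x_i)_{i\in\mathbb{N}}$, and for $p\in(0,\infty)$, $n\in\mathbb{N}$ let $$\|x\|_{\infty,p,n}:=\sup_{j\in\mathbb{N}}\Big(\frac{1}{n}\sum_{i=j}^{j+(n-1)}|x_i|^{p}\Big)^{1/p}.$$ Let $p\in[1,\infty)$ and $n,m\in\mathbb{N}$ with $n<m$. Then for all $x\in\ell^{\infty}$, $$\|x\|_{\infty,p,m}^{p}\leq \frac{(\lfloor m/n\rfloor+1)\,n}{m}\,\|x\|_{\infty,p,n}^{p}\leq 2\,\|x\|_{\infty,p,n}^{p}.$$
   Context: $\mathbb{N}=\{1,2,3,\dots\}$; $\lfloor\cdot\rfloor$ denotes the floor function. *)

theory Defs
  imports "HOL-Analysis.Analysis"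
begin

text \<open>Sequences are indexed by the positive naturals; x 0 is irrelevant.
  The windowed norm  sup_{j>=1} ((1/n) sum_{i=j}^{j+n-1} |x_i|^p)^(1/p).\<close>

definition win_norm :: "real \<Rightarrow> nat \<Rightarrow> (nat \<Rightarrow> real) \<Rightarrow> real" where
  "win_norm p n x =
     (SUP j\<in>{1..}. ((1 / real n) * (\<Sum>i=j..j+(n-1). \<bar>x i\<bar> powr p)) powr (1 / p))"

end

theory Submission
  imports Defs
begin

text \<open>Cover a window of length m by k = m div n + 1 consecutive windows of length n; since
  k n > m and the summands are nonnegative, the m-window sum is at most k times the largest
  n-window sum, i.e. at most k n \<parallel>x\<parallel>^p_{\<infinity>,p,n}. Finally k n \<le> m + n \<le> 2 m when n \<le> m.\<close>

definition win_avg :: "real \<Rightarrow> nat \<Rightarrow> (nat \<Rightarrow> real) \<Rightarrow> nat \<Rightarrow> real" where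
  "win_avg p n x j = (1 / real n) * (\<Sum>i=j..j+(n-1). \<bar>x i\<bar> powr p)"

lemma win_norm_eq_SUP_win_avg:
  "win_norm p n x = (SUP j\<in>{1..}. win_avg p n x j powr (1/p))"
  unfolding win_norm_def win_avg_def ..

lemma win_avg_nonneg: "0 \<le> win_avg p n x j"
  unfolding win_avg_def by (intro mult_nonneg_nonneg sum_nonneg) auto

lemma win_avg_eq_sum_atLeastLessThan:
  assumes "1 \<le> n"
  shows "real n * win_avg p n x j = (\<Sum>i\<in>{j..<j+n}. \<bar>x i\<bar> powr p)"
proof -
  have "{j..j+(n-1)} = {j..<j+n}" using assms by auto
  then show ?thesis using assms unfolding win_avg_def by simp
qed

lemma bdd_above_win_avg_powr:
  assumes "p > 0" and "1 \<le> n" and "bounded (x ` {1..})"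
  shows "bdd_above ((\<lambda>j. win_avg p n x j powr (1/p)) ` {1..})"
proof -
  obtain B where B: "\<And>i. 1 \<le> i \<Longrightarrow> \<bar>x i\<bar> \<le> B"
    using assms(3) unfolding bounded_iff by fastforce
  have avg_le: "win_avg p n x j \<le> B powr p" if "1 \<le> j" for j
  proof -
    have "(\<Sum>i\<in>{j..<j+n}. \<bar>x i\<bar> powr p) \<le> real (card {j..<j+n}) * B powr p"
      using that assms(1) by (intro sum_bounded_above powr_mono2) (auto intro: B)
    then have "real n * win_avg p n x j \<le> real n * B powr p"
      using win_avg_eq_sum_atLeastLessThan[OF assms(2), of p x j] by simp
    then show ?thesis
      by (rule mult_left_le_imp_le) (use assms(2) in simp)
  qed
  show ?thesis
  proof (rule bdd_aboveI2)
    fix j :: nat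
    assume "j \<in> {1..}"
    then have "win_avg p n x j powr (1/p) \<le> (B powr p) powr (1/p)"
      using avg_le assms(1) win_avg_nonneg by (intro powr_mono2) auto
    then show "win_avg p n x j powr (1/p) \<le> \<bar>B\<bar>"
      using assms(1) by (simp add: powr_powr)
  qed
qed

lemma win_avg_le_win_norm_powr:
  assumes "p > 0" and "1 \<le> n" and "bounded (x ` {1..})" and "1 \<le> j"
  shows "win_avg p n x j \<le> win_norm p n x powr p"
proof -
  have "win_avg p n x j powr (1/p) \<le> win_norm p n x"
    unfolding win_norm_eq_SUP_win_avg
    using bdd_above_win_avg_powr[OF assms(1-3)] assms(4) by (intro cSUP_upper) auto
  then have "(win_avg p n x j powr (1/p)) powr p \<le> win_norm p n x powr p"
    using assms(1) by (intro powr_mono2) auto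
  then show ?thesis
    using assms(1) win_avg_nonneg by (simp add: powr_powr)
qed

lemma win_norm_powr_le:
  assumes "p > 0" and avg_le: "\<And>j. 1 \<le> j \<Longrightarrow> win_avg p n x j \<le> c"
  shows "win_norm p n x powr p \<le> c"
proof -
  have c: "0 \<le> c" using avg_le[of 1] win_avg_nonneg order_trans by blast
  have pointwise: "win_avg p n x j powr (1/p) \<le> c powr (1/p)" if "j \<in> {1..}" for j
    using that avg_le win_avg_nonneg assms(1) by (intro powr_mono2) auto
  have "win_avg p n x 1 powr (1/p) \<le> win_norm p n x"
    unfolding win_norm_eq_SUP_win_avg using pointwise
    by (intro cSUP_upper bdd_aboveI2) auto
  then have norm_nonneg: "0 \<le> win_norm p n x"
    using powr_ge_zero order_trans by blast
  have "win_norm p n x \<le> c powr (1/p)"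
    unfolding win_norm_eq_SUP_win_avg using pointwise by (intro cSUP_least) auto
  then have "win_norm p n x powr p \<le> (c powr (1/p)) powr p"
    using norm_nonneg assms(1) by (intro powr_mono2) auto
  then show ?thesis
    using assms(1) c by (simp add: powr_powr)
qed

lemma sum_atLeastLessThan_blocks:
  fixes a k n :: nat
  shows "sum g {a..<a + k*n} = (\<Sum>t<k. sum g {a + t*n..<a + t*n + n})"
proof (induction k)
  case 0
  then show ?case by simp
next
  case (Suc k)
  have "sum g {a..<a + Suc k * n} = sum g {a..<a + k*n} + sum g {a + k*n..<a + k*n + n}"
    using sum.atLeastLessThan_concat[of a "a + k*n" "a + k*n + n" g] by (simp add: algebra_simps)
  then show ?case using Suc by simp
qed

lemma win_avg_le_win_norm_powr_ratio:
  assumes "p > 0" and "1 \<le> n" and "1 \<le> m" and "bounded (x ` {1..})" and "1 \<le> j"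
  shows "win_avg p m x j \<le> (real (m div n) + 1) * real n / real m * win_norm p n x powr p"
proof -
  define k where "k = m div n + 1"
  let ?g = "\<lambda>i. \<bar>x i\<bar> powr p"
  have "m < k * n"
    unfolding k_def using dividend_less_div_times[of n m] assms(2) by simp
  have "real m * win_avg p m x j = sum ?g {j..<j+m}"
    by (rule win_avg_eq_sum_atLeastLessThan[OF assms(3)])
  also have "\<dots> \<le> sum ?g {j..<j + k*n}"
    using \<open>m < k * n\<close> by (intro sum_mono2) auto
  also have "\<dots> = (\<Sum>t<k. real n * win_avg p n x (j + t*n))"
    unfolding sum_atLeastLessThan_blocks
    using win_avg_eq_sum_atLeastLessThan[OF assms(2)] by simp
  also have "\<dots> \<le> (\<Sum>t<k. real n * win_norm p n x powr p)"
    using assms by (intro sum_mono mult_left_mono win_avg_le_win_norm_powr) auto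
  also have "\<dots> = real k * real n * win_norm p n x powr p"
    by simp
  finally show ?thesis
    using assms(3) unfolding k_def by (simp add: field_simps)
qed

lemma div_Suc_times_le_double:
  fixes m n :: nat
  assumes "n \<le> m"
  shows "(m div n + 1) * n \<le> 2 * m"
proof -
  have "(m div n + 1) * n = m div n * n + n" by simp
  then show ?thesis using div_times_less_eq_dividend[of m n] assms by linarith
qed

theorem lemma1p4:
  fixes x :: "nat \<Rightarrow> real" and p :: real and n m :: nat
  assumes "p \<ge> 1" and "1 \<le> n" and "n < m"
    and "bounded (x ` {1..})"
  shows "win_norm p m x powr p
           \<le> (real (m div n) + 1) * real n / real m * win_norm p n x powr p
         \<and> (real (m div n) + 1) * real n / real m * win_norm p n x powr p
           \<le> 2 * win_norm p n x powr p"
proof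
  have "p > 0" using assms(1) by simp
  then show "win_norm p m x powr p
      \<le> (real (m div n) + 1) * real n / real m * win_norm p n x powr p"
    using assms by (intro win_norm_powr_le win_avg_le_win_norm_powr_ratio) auto
  have "real ((m div n + 1) * n) \<le> real (2 * m)"
    using div_Suc_times_le_double assms(3) by (metis less_imp_le of_nat_le_iff)
  then have "(real (m div n) + 1) * real n / real m \<le> 2"
    using assms(3) by (simp add: field_simps)
  then show "(real (m div n) + 1) * real n / real m * win_norm p n x powr p
      \<le> 2 * win_norm p n x powr p"
    by (intro mult_right_mono) auto
qed

end
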